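(* Let $\mathcal{E}$ be an extensive category with finite limits. If the full subcategory $\mathrm{Dec}\,\mathcal{E} \to \mathcal{E}$ is detached, then it is the least detached subcategory of $\mathcal{E}$, i.e. it is contained in every detached full reflective subcategory of $\mathcal{E}$.
   Context: Extensive category: a category with finite coproducts such that $\mathcal{E}/X \times \mathcal{E}/Y \to \mathcal{E}/(X+Y)$ is an equivalence for all $X,Y$. An object $X$ is decidable if its diagonal $X\to X\times X$ is a summand (a map $X\to Z$ is a summand if some $Y\to Z$ makes $X\to Z\leftarrow Y$ a coproduct); $\mathrm{Dec}\,\mathcal{E}$ is the full subcategory of decidable objects. For an extensive category $\mathcal{E}$ with finite products, a full reflective subcategory $\mathcal{S}\to\mathcal{E}$ (with reflector $L$ and unit $\sigma$) is detached if it is closed under finite coproducts, closed under subobjects (for every $A\in\mathcal{S}$ and mono $X\to A$, the unit $X \to LX$ is an isomorphism, i.e. $X$ lies in $\mathcal{S}$ up to iso), and the left adjoint $L$ preserves finite products. *)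

theory Defs
  imports Main
begin

record ('o, 'm) cat =
  Obj :: "'o set"
  Arr :: "'m set"
  dom :: "'m \<Rightarrow> 'o"
  cod :: "'m \<Rightarrow> 'o"
  comp :: "'m \<Rightarrow> 'm \<Rightarrow> 'm"   (* comp C g f = g o f *)
  idm :: "'o \<Rightarrow> 'm"

definition hom :: "('o, 'm) cat \<Rightarrow> 'o \<Rightarrow> 'o \<Rightarrow> 'm set" where
  "hom C X Y = {f \<in> Arr C. dom C f = X \<and> cod C f = Y}"

definition category :: "('o, 'm) cat \<Rightarrow> bool" where
  "category C \<longleftrightarrow>
     (\<forall>f \<in> Arr C. dom C f \<in> Obj C \<and> cod C f \<in> Obj C) \<and>
     (\<forall>X \<in> Obj C. idm C X \<in> hom C X X) \<and>
     (\<forall>f \<in> Arr C. \<forall>g \<in> Arr C. dom C g = cod C f \<longrightarrow>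
          comp C g f \<in> hom C (dom C f) (cod C g)) \<and>
     (\<forall>f \<in> Arr C. \<forall>g \<in> Arr C. \<forall>h \<in> Arr C. dom C g = cod C f \<longrightarrow> dom C h = cod C g \<longrightarrow>
          comp C h (comp C g f) = comp C (comp C h g) f) \<and>
     (\<forall>f \<in> Arr C. comp C f (idm C (dom C f)) = f \<and> comp C (idm C (cod C f)) f = f)"

definition iso :: "('o, 'm) cat \<Rightarrow> 'm \<Rightarrow> bool" where
  "iso C f \<longleftrightarrow> f \<in> Arr C \<and>
     (\<exists>g \<in> hom C (cod C f) (dom C f).
        comp C g f = idm C (dom C f) \<and> comp C f g = idm C (cod C f))"

definition isomorphic :: "('o, 'm) cat \<Rightarrow> 'o \<Rightarrow> 'o \<Rightarrow> bool" where
  "isomorphic C X Y \<longleftrightarrow> (\<exists>f \<in> hom C X Y. iso C f)"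

definition mono :: "('o, 'm) cat \<Rightarrow> 'm \<Rightarrow> bool" where
  "mono C m \<longleftrightarrow> m \<in> Arr C \<and>
     (\<forall>Z. \<forall>g \<in> hom C Z (dom C m). \<forall>h \<in> hom C Z (dom C m).
        comp C m g = comp C m h \<longrightarrow> g = h)"

definition is_initial :: "('o, 'm) cat \<Rightarrow> 'o \<Rightarrow> bool" where
  "is_initial C I0 \<longleftrightarrow> I0 \<in> Obj C \<and> (\<forall>W \<in> Obj C. \<exists>!h. h \<in> hom C I0 W)"

definition is_terminal :: "('o, 'm) cat \<Rightarrow> 'o \<Rightarrow> bool" where
  "is_terminal C T \<longleftrightarrow> T \<in> Obj C \<and> (\<forall>W \<in> Obj C. \<exists>!h. h \<in> hom C W T)"

definition is_coproduct :: "('o, 'm) cat \<Rightarrow> 'm \<Rightarrow> 'm \<Rightarrow> bool" where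
  "is_coproduct C i j \<longleftrightarrow> i \<in> Arr C \<and> j \<in> Arr C \<and> cod C i = cod C j \<and>
     (\<forall>W \<in> Obj C. \<forall>f \<in> hom C (dom C i) W. \<forall>g \<in> hom C (dom C j) W.
        \<exists>!h. h \<in> hom C (cod C i) W \<and> comp C h i = f \<and> comp C h j = g)"

definition is_product :: "('o, 'm) cat \<Rightarrow> 'm \<Rightarrow> 'm \<Rightarrow> bool" where
  "is_product C p q \<longleftrightarrow> p \<in> Arr C \<and> q \<in> Arr C \<and> dom C p = dom C q \<and>
     (\<forall>W \<in> Obj C. \<forall>f \<in> hom C W (cod C p). \<forall>g \<in> hom C W (cod C q).
        \<exists>!h. h \<in> hom C W (dom C p) \<and> comp C p h = f \<and> comp C q h = g)"

definition is_pullback :: "('o, 'm) cat \<Rightarrow> 'm \<Rightarrow> 'm \<Rightarrow> 'm \<Rightarrow> 'm \<Rightarrow> bool" where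
  "is_pullback C f g p q \<longleftrightarrow> f \<in> Arr C \<and> g \<in> Arr C \<and> p \<in> Arr C \<and> q \<in> Arr C \<and>
     cod C f = cod C g \<and> dom C p = dom C q \<and> cod C p = dom C f \<and> cod C q = dom C g \<and>
     comp C f p = comp C g q \<and>
     (\<forall>W \<in> Obj C. \<forall>u \<in> hom C W (dom C f). \<forall>v \<in> hom C W (dom C g).
        comp C f u = comp C g v \<longrightarrow>
        (\<exists>!h. h \<in> hom C W (dom C p) \<and> comp C p h = u \<and> comp C q h = v))"

definition has_finite_coproducts :: "('o, 'm) cat \<Rightarrow> bool" where
  "has_finite_coproducts C \<longleftrightarrow> (\<exists>I0. is_initial C I0) \<and>
     (\<forall>X \<in> Obj C. \<forall>Y \<in> Obj C. \<exists>i j. is_coproduct C i j \<and> dom C i = X \<and> dom C j = Y)"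

definition has_finite_products :: "('o, 'm) cat \<Rightarrow> bool" where
  "has_finite_products C \<longleftrightarrow> (\<exists>T. is_terminal C T) \<and>
     (\<forall>X \<in> Obj C. \<forall>Y \<in> Obj C. \<exists>p q. is_product C p q \<and> cod C p = X \<and> cod C q = Y)"

text \<open>Finite limits: a terminal object and all pullbacks (standard generating set).\<close>
definition has_finite_limits :: "('o, 'm) cat \<Rightarrow> bool" where
  "has_finite_limits C \<longleftrightarrow> (\<exists>T. is_terminal C T) \<and>
     (\<forall>f \<in> Arr C. \<forall>g \<in> Arr C. cod C f = cod C g \<longrightarrow> (\<exists>p q. is_pullback C f g p q))"

text \<open>Given a coproduct  X --jX--> X+Y <--jY-- Y  and objects a : A -> X, b : B -> Y of the
  slices, and a coproduct  A --iA--> A+B <--iB-- B, the arrow c : A+B -> X+Y is the value of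
  the functor  E/X x E/Y -> E/(X+Y)  at (a,b) iff  c o iA = jX o a  and  c o iB = jY o b.\<close>
definition sum_map :: "('o, 'm) cat \<Rightarrow> 'm \<Rightarrow> 'm \<Rightarrow> 'm \<Rightarrow> 'm \<Rightarrow> 'm \<Rightarrow> 'm \<Rightarrow> 'm \<Rightarrow> bool" where
  "sum_map C jX jY iA iB a b c \<longleftrightarrow>
     c \<in> hom C (cod C iA) (cod C jX) \<and> comp C c iA = comp C jX a \<and> comp C c iB = comp C jY b"

definition sum_functor_equivalence :: "('o, 'm) cat \<Rightarrow> 'm \<Rightarrow> 'm \<Rightarrow> bool" where
  "sum_functor_equivalence C jX jY \<longleftrightarrow>
     \<comment> \<open>fully faithful\<close>
     (\<forall>a b iA iB c a' b' iA' iB' c'.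
        a \<in> hom C (dom C iA) (dom C jX) \<and> b \<in> hom C (dom C iB) (dom C jY) \<and>
        is_coproduct C iA iB \<and> sum_map C jX jY iA iB a b c \<and>
        a' \<in> hom C (dom C iA') (dom C jX) \<and> b' \<in> hom C (dom C iB') (dom C jY) \<and>
        is_coproduct C iA' iB' \<and> sum_map C jX jY iA' iB' a' b' c' \<longrightarrow>
        (\<forall>w \<in> hom C (cod C iA) (cod C iA'). comp C c' w = c \<longrightarrow>
           (\<exists>!(u, v). u \<in> hom C (dom C iA) (dom C iA') \<and> comp C a' u = a \<and>
                      v \<in> hom C (dom C iB) (dom C iB') \<and> comp C b' v = b \<and>
                      comp C w iA = comp C iA' u \<and> comp C w iB = comp C iB' v))) \<and>
     \<comment> \<open>essentially surjective\<close>
     (\<forall>z \<in> Arr C. cod C z = cod C jX \<longrightarrow>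
        (\<exists>a b iA iB c \<phi>.
           a \<in> hom C (dom C iA) (dom C jX) \<and> b \<in> hom C (dom C iB) (dom C jY) \<and>
           is_coproduct C iA iB \<and> sum_map C jX jY iA iB a b c \<and>
           \<phi> \<in> hom C (cod C iA) (dom C z) \<and> iso C \<phi> \<and> comp C z \<phi> = c))"

definition extensive :: "('o, 'm) cat \<Rightarrow> bool" where
  "extensive C \<longleftrightarrow> category C \<and> has_finite_coproducts C \<and>
     (\<forall>jX jY. is_coproduct C jX jY \<longrightarrow> sum_functor_equivalence C jX jY)"

definition summand :: "('o, 'm) cat \<Rightarrow> 'm \<Rightarrow> bool" where
  "summand C f \<longleftrightarrow> (\<exists>g. is_coproduct C f g)"

definition decidable :: "('o, 'm) cat \<Rightarrow> 'o \<Rightarrow> bool" where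
  "decidable C X \<longleftrightarrow> X \<in> Obj C \<and>
     (\<exists>p q d. is_product C p q \<and> cod C p = X \<and> cod C q = X \<and>
        d \<in> hom C X (dom C p) \<and> comp C p d = idm C X \<and> comp C q d = idm C X \<and>
        summand C d)"

text \<open>A full subcategory is given by a predicate S on objects. X lies in S up to iso.\<close>
definition in_rep :: "('o, 'm) cat \<Rightarrow> ('o \<Rightarrow> bool) \<Rightarrow> 'o \<Rightarrow> bool" where
  "in_rep C S X \<longleftrightarrow> (\<exists>A. S A \<and> isomorphic C X A)"

definition full_reflective :: "('o, 'm) cat \<Rightarrow> ('o \<Rightarrow> bool) \<Rightarrow> ('o \<Rightarrow> 'o) \<Rightarrow> ('o \<Rightarrow> 'm) \<Rightarrow> bool" where
  "full_reflective C S L \<sigma> \<longleftrightarrow>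
     (\<forall>A. S A \<longrightarrow> A \<in> Obj C) \<and>
     (\<forall>X \<in> Obj C. S (L X) \<and> \<sigma> X \<in> hom C X (L X) \<and>
        (\<forall>A. S A \<longrightarrow> (\<forall>f \<in> hom C X A. \<exists>!g. g \<in> hom C (L X) A \<and> comp C g (\<sigma> X) = f)))"

text \<open>L preserves finite products: it sends terminal objects to terminal objects, and for a
  product P with projections p, q, the arrows L p, L q (characterised by
  L p o \<sigma> P = \<sigma> X o p) form a product diagram.\<close>
definition reflector_preserves_finite_products ::
  "('o, 'm) cat \<Rightarrow> ('o \<Rightarrow> 'o) \<Rightarrow> ('o \<Rightarrow> 'm) \<Rightarrow> bool" where
  "reflector_preserves_finite_products C L \<sigma> \<longleftrightarrow>
     (\<forall>T. is_terminal C T \<longrightarrow> is_terminal C (L T)) \<and>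
     (\<forall>p q p' q'. is_product C p q \<and>
        p' \<in> hom C (L (dom C p)) (L (cod C p)) \<and> comp C p' (\<sigma> (dom C p)) = comp C (\<sigma> (cod C p)) p \<and>
        q' \<in> hom C (L (dom C q)) (L (cod C q)) \<and> comp C q' (\<sigma> (dom C q)) = comp C (\<sigma> (cod C q)) q
        \<longrightarrow> is_product C p' q')"

definition closed_under_finite_coproducts :: "('o, 'm) cat \<Rightarrow> ('o \<Rightarrow> bool) \<Rightarrow> bool" where
  "closed_under_finite_coproducts C S \<longleftrightarrow>
     (\<forall>I0. is_initial C I0 \<longrightarrow> in_rep C S I0) \<and>
     (\<forall>i j. is_coproduct C i j \<and> S (dom C i) \<and> S (dom C j) \<longrightarrow> in_rep C S (cod C i))"

definition closed_under_subobjects ::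
  "('o, 'm) cat \<Rightarrow> ('o \<Rightarrow> bool) \<Rightarrow> ('o \<Rightarrow> 'm) \<Rightarrow> bool" where
  "closed_under_subobjects C S \<sigma> \<longleftrightarrow>
     (\<forall>A m. S A \<and> mono C m \<and> cod C m = A \<longrightarrow> iso C (\<sigma> (dom C m)))"

definition detached :: "('o, 'm) cat \<Rightarrow> ('o \<Rightarrow> bool) \<Rightarrow> ('o \<Rightarrow> 'o) \<Rightarrow> ('o \<Rightarrow> 'm) \<Rightarrow> bool" where
  "detached C S L \<sigma> \<longleftrightarrow> full_reflective C S L \<sigma> \<and>
     closed_under_finite_coproducts C S \<and> closed_under_subobjects C S \<sigma> \<and>
     reflector_preserves_finite_products C L \<sigma>"

end

theory Submission
  imports Defs
begin

text \<open>Let X be decidable, so that X \<times> X = X + D with the diagonal as first injection, and let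
  S be detached with unit \<sigma>. Since S is closed under subobjects it suffices that \<sigma> X is mono.
  Because L preserves the product X \<times> X and S is closed under coproducts, L sends the
  decomposition X \<times> X = X + D to a map L(X \<times> X) = LX \<times> LX \<rightarrow> LX + LD under which the diagonal
  of LX goes to the first injection. Hence any generalized element of D whose two projections
  are identified by \<sigma> X lands in both summands of LX + LD, so its domain is empty by
  disjointness of coproducts. Extensivity splits any pair g, h with \<sigma> X g = \<sigma> X h along
  X \<times> X = X + D into a part where g = h and such an empty part, so g = h.\<close>

lemma hom_objs: "category C \<Longrightarrow> f \<in> hom C X Y \<Longrightarrow> X \<in> Obj C \<and> Y \<in> Obj C"
  unfolding category_def hom_def by auto

lemma comp_hom: "category C \<Longrightarrow> f \<in> hom C X Y \<Longrightarrow> g \<in> hom C Y Z \<Longrightarrow> comp C g f \<in> hom C X Z"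
  unfolding category_def hom_def by auto

lemma comp_assoc: "category C \<Longrightarrow> f \<in> hom C W X \<Longrightarrow> g \<in> hom C X Y \<Longrightarrow> h \<in> hom C Y Z \<Longrightarrow>
  comp C h (comp C g f) = comp C (comp C h g) f"
  unfolding category_def hom_def by auto

lemma idm_hom: "category C \<Longrightarrow> X \<in> Obj C \<Longrightarrow> idm C X \<in> hom C X X"
  unfolding category_def by auto

lemma comp_idm_right: "category C \<Longrightarrow> f \<in> hom C X Y \<Longrightarrow> comp C f (idm C X) = f"
  unfolding category_def hom_def by auto

lemma comp_idm_left: "category C \<Longrightarrow> f \<in> hom C X Y \<Longrightarrow> comp C (idm C Y) f = f"
  unfolding category_def hom_def by auto

lemma iso_inverse:
  assumes "iso C f" and "f \<in> hom C X Y"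
  obtains g where "g \<in> hom C Y X" and "comp C g f = idm C X" and "comp C f g = idm C Y"
  using assms unfolding iso_def hom_def by auto

lemma initial_hom_exists: "is_initial C I0 \<Longrightarrow> W \<in> Obj C \<Longrightarrow> \<exists>f. f \<in> hom C I0 W"
  unfolding is_initial_def by blast

lemma initial_hom_unique:
  "is_initial C I0 \<Longrightarrow> W \<in> Obj C \<Longrightarrow> f \<in> hom C I0 W \<Longrightarrow> g \<in> hom C I0 W \<Longrightarrow> f = g"
  unfolding is_initial_def by blast

lemma product_pairing_exists:
  "is_product C p q \<Longrightarrow> W \<in> Obj C \<Longrightarrow> f \<in> hom C W (cod C p) \<Longrightarrow> g \<in> hom C W (cod C q) \<Longrightarrow>
   \<exists>h. h \<in> hom C W (dom C p) \<and> comp C p h = f \<and> comp C q h = g"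
  unfolding is_product_def by blast

lemma product_arrow_eqI:
  assumes prod: "is_product C p q" and cat: "category C" and W: "W \<in> Obj C"
    and h1: "h1 \<in> hom C W (dom C p)" and h2: "h2 \<in> hom C W (dom C p)"
    and "comp C p h1 = comp C p h2" and "comp C q h1 = comp C q h2"
  shows "h1 = h2"
proof -
  have "p \<in> hom C (dom C p) (cod C p)" and "q \<in> hom C (dom C p) (cod C q)"
    using prod unfolding is_product_def hom_def by auto
  then have "\<exists>!h. h \<in> hom C W (dom C p) \<and> comp C p h = comp C p h2 \<and> comp C q h = comp C q h2"
    using prod W comp_hom[OF cat h2] unfolding is_product_def by blast
  then show ?thesis using assms by blast
qed

lemma coproduct_copairing_exists:
  "is_coproduct C i j \<Longrightarrow> W \<in> Obj C \<Longrightarrow> f \<in> hom C (dom C i) W \<Longrightarrow> g \<in> hom C (dom C j) W \<Longrightarrow>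
   \<exists>h. h \<in> hom C (cod C i) W \<and> comp C h i = f \<and> comp C h j = g"
  unfolding is_coproduct_def by blast

lemma coproduct_arrow_eqI:
  assumes cp: "is_coproduct C i j" and cat: "category C" and W: "W \<in> Obj C"
    and h1: "h1 \<in> hom C (cod C i) W" and h2: "h2 \<in> hom C (cod C i) W"
    and "comp C h1 i = comp C h2 i" and "comp C h1 j = comp C h2 j"
  shows "h1 = h2"
proof -
  have "i \<in> hom C (dom C i) (cod C i)" and "j \<in> hom C (dom C j) (cod C i)"
    using cp unfolding is_coproduct_def hom_def by auto
  then have "\<exists>!h. h \<in> hom C (cod C i) W \<and> comp C h i = comp C h2 i \<and> comp C h j = comp C h2 j"
    using cp W comp_hom[OF cat _ h2] unfolding is_coproduct_def by blast
  then show ?thesis using assms by blast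
qed

lemma is_coproduct_swap: "is_coproduct C i j \<Longrightarrow> is_coproduct C j i"
  unfolding is_coproduct_def by (metis (no_types, lifting))

lemma coproduct_idm_initial:
  assumes cat: "category C" and I0: "is_initial C I0" and i0: "i0 \<in> hom C I0 B"
  shows "is_coproduct C (idm C B) i0"
  unfolding is_coproduct_def
proof (intro conjI ballI)
  have B: "idm C B \<in> hom C B B" using idm_hom[OF cat] hom_objs[OF cat i0] by blast
  then show "idm C B \<in> Arr C" "i0 \<in> Arr C" "cod C (idm C B) = cod C i0"
    using i0 by (auto simp: hom_def)
  fix W f g assume W: "W \<in> Obj C" and f: "f \<in> hom C (dom C (idm C B)) W"
    and g: "g \<in> hom C (dom C i0) W"
  have f': "f \<in> hom C B W" and g': "g \<in> hom C I0 W" using f g B i0 by (auto simp: hom_def)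
  show "\<exists>!h. h \<in> hom C (cod C (idm C B)) W \<and> comp C h (idm C B) = f \<and> comp C h i0 = g"
  proof (rule ex1I[of _ f])
    show "f \<in> hom C (cod C (idm C B)) W \<and> comp C f (idm C B) = f \<and> comp C f i0 = g"
      using f' B comp_idm_right[OF cat f'] initial_hom_unique[OF I0 W comp_hom[OF cat i0 f'] g']
      by (simp add: hom_def)
  next
    fix h assume "h \<in> hom C (cod C (idm C B)) W \<and> comp C h (idm C B) = f \<and> comp C h i0 = g"
    then show "h = f" using B comp_idm_right[OF cat] by (auto simp: hom_def)
  qed
qed

definition subinitial :: "('o, 'm) cat \<Rightarrow> 'o \<Rightarrow> bool" where
  "subinitial C B \<longleftrightarrow> (\<forall>Y. \<forall>y1 \<in> hom C B Y. \<forall>y2 \<in> hom C B Y. y1 = y2)"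

lemma extensive_summand_meet_retract_initial:
  assumes ext: "extensive C" and cp: "is_coproduct C j1 j2"
    and e: "e \<in> hom C B (dom C j1)" and f: "f \<in> hom C B (dom C j2)"
    and eq: "comp C j1 e = comp C j2 f"
    and I0: "is_initial C I0" and i0: "i0 \<in> hom C I0 B"
  shows "\<exists>u \<in> hom C B I0. comp C i0 u = idm C B"
proof -
  have cat: "category C" using ext by (simp add: extensive_def)
  have B: "B \<in> Obj C" using hom_objs[OF cat e] by auto
  have j1: "j1 \<in> hom C (dom C j1) (cod C j1)" and j2: "j2 \<in> hom C (dom C j2) (cod C j1)"
    using cp by (auto simp: is_coproduct_def hom_def)
  have K: "cod C j1 \<in> Obj C" using hom_objs[OF cat j1] by auto
  obtain a0 where a0: "a0 \<in> hom C I0 (dom C j1)"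
    using initial_hom_exists[OF I0] hom_objs[OF cat j1] by blast
  obtain b0 where b0: "b0 \<in> hom C I0 (dom C j2)"
    using initial_hom_exists[OF I0] hom_objs[OF cat j2] by blast
  have idB: "idm C B \<in> hom C B B" using idm_hom[OF cat B] .
  have cpB0: "is_coproduct C (idm C B) i0" using coproduct_idm_initial[OF cat I0 i0] .
  have cp0B: "is_coproduct C i0 (idm C B)" using is_coproduct_swap[OF cpB0] .
  txt \<open>The common value w of both sides of eq is the image of (e, 0) and of (0, f) under
    the sum functor; full faithfulness applied to idm : B \<rightarrow> B inverts i0 : 0 \<rightarrow> B.\<close>
  define w where "w = comp C j1 e"
  have w: "w \<in> hom C B (cod C j1)" unfolding w_def using comp_hom[OF cat e j1] .
  have "sum_map C j1 j2 (idm C B) i0 e b0 w"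
    using idB i0 w comp_idm_right[OF cat w]
      initial_hom_unique[OF I0 K comp_hom[OF cat i0 w] comp_hom[OF cat b0 j2]]
    by (auto simp: sum_map_def hom_def w_def)
  moreover have "sum_map C j1 j2 i0 (idm C B) a0 f w"
    using idB i0 w comp_idm_right[OF cat w] eq
      initial_hom_unique[OF I0 K comp_hom[OF cat i0 w] comp_hom[OF cat a0 j1]]
    by (auto simp: sum_map_def hom_def w_def)
  ultimately have prem: "e \<in> hom C (dom C (idm C B)) (dom C j1) \<and> b0 \<in> hom C (dom C i0) (dom C j2) \<and>
      is_coproduct C (idm C B) i0 \<and> sum_map C j1 j2 (idm C B) i0 e b0 w \<and>
      a0 \<in> hom C (dom C i0) (dom C j1) \<and> f \<in> hom C (dom C (idm C B)) (dom C j2) \<and>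
      is_coproduct C i0 (idm C B) \<and> sum_map C j1 j2 i0 (idm C B) a0 f w"
    using e f a0 b0 cpB0 cp0B idB i0 by (auto simp: hom_def)
  have idB': "idm C B \<in> hom C (cod C (idm C B)) (cod C i0)" using idB i0 by (auto simp: hom_def)
  have sfe: "sum_functor_equivalence C j1 j2" using ext cp by (simp add: extensive_def)
  have "\<exists>!(u, v). u \<in> hom C (dom C (idm C B)) (dom C i0) \<and> comp C a0 u = e \<and>
      v \<in> hom C (dom C i0) (dom C (idm C B)) \<and> comp C f v = b0 \<and>
      comp C (idm C B) (idm C B) = comp C i0 u \<and> comp C (idm C B) i0 = comp C (idm C B) v"
    using sfe[unfolded sum_functor_equivalence_def, THEN conjunct1, rule_format, OF prem idB']
      comp_idm_right[OF cat w] by blast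
  then obtain u v where "u \<in> hom C (dom C (idm C B)) (dom C i0)"
    and "comp C (idm C B) (idm C B) = comp C i0 u"
    by auto
  then show ?thesis using idB i0 comp_idm_right[OF cat idB] by (auto simp: hom_def)
qed

lemma extensive_coproduct_disjoint:
  assumes ext: "extensive C" and cp: "is_coproduct C j1 j2"
    and e: "e \<in> hom C B (dom C j1)" and f: "f \<in> hom C B (dom C j2)"
    and eq: "comp C j1 e = comp C j2 f"
  shows "subinitial C B"
  unfolding subinitial_def
proof (intro allI ballI)
  fix Y y1 y2 assume y1: "y1 \<in> hom C B Y" and y2: "y2 \<in> hom C B Y"
  have cat: "category C" using ext by (simp add: extensive_def)
  obtain I0 where I0: "is_initial C I0"
    using ext by (auto simp: extensive_def has_finite_coproducts_def)
  have B: "B \<in> Obj C" and Y: "Y \<in> Obj C" using hom_objs[OF cat y1] by auto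
  obtain i0 where i0: "i0 \<in> hom C I0 B" using initial_hom_exists[OF I0 B] by blast
  obtain u where u: "u \<in> hom C B I0" and i0u: "comp C i0 u = idm C B"
    using extensive_summand_meet_retract_initial[OF ext cp e f eq I0 i0] by blast
  have "y1 = comp C (comp C y1 i0) u"
    using i0u comp_assoc[OF cat u i0 y1] comp_idm_right[OF cat y1] by simp
  also have "\<dots> = comp C (comp C y2 i0) u"
    using initial_hom_unique[OF I0 Y comp_hom[OF cat i0 y1] comp_hom[OF cat i0 y2]] by simp
  also have "\<dots> = y2" using i0u comp_assoc[OF cat u i0 y2] comp_idm_right[OF cat y2] by simp
  finally show "y1 = y2" .
qed

lemma extensive_decompose:
  assumes ext: "extensive C" and cp: "is_coproduct C i j" and k: "k \<in> hom C Z (cod C i)"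
  obtains iA iB a b \<phi> where "is_coproduct C iA iB" and "\<phi> \<in> hom C (cod C iA) Z" and "iso C \<phi>"
    and "a \<in> hom C (dom C iA) (dom C i)" and "b \<in> hom C (dom C iB) (dom C j)"
    and "comp C (comp C k \<phi>) iA = comp C i a" and "comp C (comp C k \<phi>) iB = comp C j b"
proof -
  have "sum_functor_equivalence C i j" using ext cp by (simp add: extensive_def)
  then obtain a b iA iB c \<phi> where a: "a \<in> hom C (dom C iA) (dom C i)"
      and b: "b \<in> hom C (dom C iB) (dom C j)" and cpA: "is_coproduct C iA iB"
      and sm: "sum_map C i j iA iB a b c" and \<phi>: "\<phi> \<in> hom C (cod C iA) (dom C k)"
      and iso: "iso C \<phi>" and k\<phi>: "comp C k \<phi> = c"
    using k unfolding sum_functor_equivalence_def by (auto simp: hom_def)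
  show ?thesis
  proof (rule that[OF cpA _ iso a b])
    show "\<phi> \<in> hom C (cod C iA) Z" using \<phi> k by (simp add: hom_def)
    show "comp C (comp C k \<phi>) iA = comp C i a" "comp C (comp C k \<phi>) iB = comp C j b"
      using sm k\<phi> by (auto simp: sum_map_def)
  qed
qed

lemma iso_cancel_right:
  assumes cat: "category C" and "iso C \<phi>" and \<phi>: "\<phi> \<in> hom C W Z"
    and g: "g \<in> hom C Z Y" and h: "h \<in> hom C Z Y" and eq: "comp C g \<phi> = comp C h \<phi>"
  shows "g = h"
proof -
  obtain \<phi>' where \<phi>': "\<phi>' \<in> hom C Z W" and "comp C \<phi> \<phi>' = idm C Z"
    using iso_inverse[OF assms(2) \<phi>] by blast
  then show ?thesis
    using eq comp_assoc[OF cat \<phi>' \<phi> g] comp_assoc[OF cat \<phi>' \<phi> h]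
      comp_idm_right[OF cat g] comp_idm_right[OF cat h] by simp
qed

text \<open>Splitting the pair (g, h) : Z \<rightarrow> X \<times> X along X \<times> X = X + D, where d is the diagonal.\<close>
lemma decidable_pair_split:
  assumes ext: "extensive C"
    and prod: "is_product C p q" and p: "p \<in> hom C P X" and q: "q \<in> hom C P X"
    and d: "d \<in> hom C X P" and pd: "comp C p d = idm C X" and qd: "comp C q d = idm C X"
    and cp: "is_coproduct C d c" and c: "c \<in> hom C D P"
    and g: "g \<in> hom C Z X" and h: "h \<in> hom C Z X"
  obtains iA iB \<phi> b where "is_coproduct C iA iB" and "\<phi> \<in> hom C (cod C iA) Z" and "iso C \<phi>"
    and "b \<in> hom C (dom C iB) D"
    and "comp C (comp C g \<phi>) iA = comp C (comp C h \<phi>) iA"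
    and "comp C (comp C g \<phi>) iB = comp C p (comp C c b)"
    and "comp C (comp C h \<phi>) iB = comp C q (comp C c b)"
proof -
  have cat: "category C" using ext by (simp add: extensive_def)
  have Z: "Z \<in> Obj C" using hom_objs[OF cat g] by auto
  obtain k where k: "k \<in> hom C Z P" and pk: "comp C p k = g" and qk: "comp C q k = h"
    using product_pairing_exists[OF prod Z, of g h] g h p q by (auto simp: hom_def)
  have "k \<in> hom C Z (cod C d)" using k d by (simp add: hom_def)
  then obtain iA iB a b \<phi> where cpA: "is_coproduct C iA iB" and \<phi>: "\<phi> \<in> hom C (cod C iA) Z"
    and iso\<phi>: "iso C \<phi>" and a: "a \<in> hom C (dom C iA) (dom C d)"
    and b: "b \<in> hom C (dom C iB) (dom C c)"
    and kA: "comp C (comp C k \<phi>) iA = comp C d a" and kB: "comp C (comp C k \<phi>) iB = comp C c b"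
    by (rule extensive_decompose[OF ext cp])
  have a: "a \<in> hom C (dom C iA) X" and b: "b \<in> hom C (dom C iB) D"
    using a b d c by (simp_all add: hom_def)
  have iA: "iA \<in> hom C (dom C iA) (cod C iA)" and iB: "iB \<in> hom C (dom C iB) (cod C iA)"
    using cpA by (auto simp: is_coproduct_def hom_def)
  have k\<phi>: "comp C k \<phi> \<in> hom C (cod C iA) P" using comp_hom[OF cat \<phi> k] .
  have project: "comp C (comp C g \<phi>) i = comp C p (comp C (comp C k \<phi>) i)"
    "comp C (comp C h \<phi>) i = comp C q (comp C (comp C k \<phi>) i)"
    if "i \<in> hom C W (cod C iA)" for i W
    using pk qk comp_assoc[OF cat \<phi> k p] comp_assoc[OF cat \<phi> k q]
      comp_assoc[OF cat that k\<phi> p] comp_assoc[OF cat that k\<phi> q] by auto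
  show ?thesis
  proof (rule that[OF cpA \<phi> iso\<phi> b])
    show "comp C (comp C g \<phi>) iA = comp C (comp C h \<phi>) iA"
      using project[OF iA] kA comp_assoc[OF cat a d p] comp_assoc[OF cat a d q] pd qd
        comp_idm_left[OF cat a] by simp
    show "comp C (comp C g \<phi>) iB = comp C p (comp C c b)"
      "comp C (comp C h \<phi>) iB = comp C q (comp C c b)"
      using project[OF iB] kB by simp_all
  qed
qed

lemma decidable_mono_criterion:
  assumes ext: "extensive C"
    and prod: "is_product C p q" and p: "p \<in> hom C P X" and q: "q \<in> hom C P X"
    and d: "d \<in> hom C X P" and pd: "comp C p d = idm C X" and qd: "comp C q d = idm C X"
    and cp: "is_coproduct C d c" and c: "c \<in> hom C D P"
    and f: "f \<in> hom C X Y"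
    and off_diagonal: "\<And>B b. b \<in> hom C B D \<Longrightarrow>
      comp C f (comp C p (comp C c b)) = comp C f (comp C q (comp C c b)) \<Longrightarrow> subinitial C B"
  shows "mono C f"
  unfolding mono_def
proof (intro conjI allI ballI impI)
  have cat: "category C" using ext by (simp add: extensive_def)
  show "f \<in> Arr C" using f by (simp add: hom_def)
  fix Z g h assume "g \<in> hom C Z (dom C f)" "h \<in> hom C Z (dom C f)"
    and fgh: "comp C f g = comp C f h"
  then have g: "g \<in> hom C Z X" and h: "h \<in> hom C Z X" using f by (auto simp: hom_def)
  have X: "X \<in> Obj C" using hom_objs[OF cat g] by auto
  obtain iA iB \<phi> b where cpA: "is_coproduct C iA iB" and \<phi>: "\<phi> \<in> hom C (cod C iA) Z"
    and iso\<phi>: "iso C \<phi>" and b: "b \<in> hom C (dom C iB) D"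
    and onA: "comp C (comp C g \<phi>) iA = comp C (comp C h \<phi>) iA"
    and gB: "comp C (comp C g \<phi>) iB = comp C p (comp C c b)"
    and hB: "comp C (comp C h \<phi>) iB = comp C q (comp C c b)"
    by (rule decidable_pair_split[OF ext prod p q d pd qd cp c g h])
  have iB: "iB \<in> hom C (dom C iB) (cod C iA)" using cpA by (auto simp: is_coproduct_def hom_def)
  have "comp C f (comp C p (comp C c b)) = comp C (comp C f g) (comp C \<phi> iB)"
    using gB comp_assoc[OF cat iB \<phi> g] comp_assoc[OF cat comp_hom[OF cat iB \<phi>] g f] by simp
  also have "\<dots> = comp C f (comp C q (comp C c b))"
    using hB fgh comp_assoc[OF cat iB \<phi> h] comp_assoc[OF cat comp_hom[OF cat iB \<phi>] h f] by simp
  finally have "subinitial C (dom C iB)" using off_diagonal[OF b] by blast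
  then have onB: "comp C (comp C g \<phi>) iB = comp C (comp C h \<phi>) iB"
    using comp_hom[OF cat iB comp_hom[OF cat \<phi> g]] comp_hom[OF cat iB comp_hom[OF cat \<phi> h]]
    unfolding subinitial_def by blast
  have "comp C g \<phi> = comp C h \<phi>"
    using coproduct_arrow_eqI[OF cpA cat X comp_hom[OF cat \<phi> g] comp_hom[OF cat \<phi> h] onA onB] .
  then show "g = h" using iso_cancel_right[OF cat iso\<phi> \<phi> g h] by blast
qed

lemma reflection_unit:
  "full_reflective C S L \<sigma> \<Longrightarrow> X \<in> Obj C \<Longrightarrow> S (L X) \<and> \<sigma> X \<in> hom C X (L X)"
  unfolding full_reflective_def by blast

lemma reflective_Obj: "full_reflective C S L \<sigma> \<Longrightarrow> S A \<Longrightarrow> A \<in> Obj C"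
  unfolding full_reflective_def by blast

lemma reflection_factor_exists:
  "full_reflective C S L \<sigma> \<Longrightarrow> X \<in> Obj C \<Longrightarrow> S A \<Longrightarrow> f \<in> hom C X A \<Longrightarrow>
   \<exists>g. g \<in> hom C (L X) A \<and> comp C g (\<sigma> X) = f"
  unfolding full_reflective_def by blast

text \<open>A weak form of L(X + Y) = LX + LY: only a comparison map is asserted.\<close>
lemma reflection_coproduct_comparison:
  assumes cat: "category C" and cf: "has_finite_coproducts C"
    and fr: "full_reflective C S L \<sigma>" and clc: "closed_under_finite_coproducts C S"
    and cp: "is_coproduct C i j" and i: "i \<in> hom C X P" and j: "j \<in> hom C Y P"
  obtains j1 j2 \<theta> where "is_coproduct C j1 j2" and "j1 \<in> hom C (L X) (cod C j1)"
    and "j2 \<in> hom C (L Y) (cod C j1)" and "\<theta> \<in> hom C (L P) (cod C j1)"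
    and "comp C \<theta> (comp C (\<sigma> P) i) = comp C j1 (\<sigma> X)"
    and "comp C \<theta> (comp C (\<sigma> P) j) = comp C j2 (\<sigma> Y)"
proof -
  have X: "X \<in> Obj C" and Y: "Y \<in> Obj C" and P: "P \<in> Obj C"
    using hom_objs[OF cat i] hom_objs[OF cat j] by auto
  have SX: "S (L X)" and sX: "\<sigma> X \<in> hom C X (L X)" and SY: "S (L Y)" and sY: "\<sigma> Y \<in> hom C Y (L Y)"
    and sP: "\<sigma> P \<in> hom C P (L P)"
    using reflection_unit[OF fr] X Y P by auto
  obtain j1 j2 where cpj: "is_coproduct C j1 j2" and "dom C j1 = L X" and "dom C j2 = L Y"
    using cf reflective_Obj[OF fr SX] reflective_Obj[OF fr SY]
    unfolding has_finite_coproducts_def by blast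
  then have j1: "j1 \<in> hom C (L X) (cod C j1)" and j2: "j2 \<in> hom C (L Y) (cod C j1)"
    by (auto simp: is_coproduct_def hom_def)
  have Q: "cod C j1 \<in> Obj C" using hom_objs[OF cat j1] by auto
  obtain t where t: "t \<in> hom C P (cod C j1)" and ti: "comp C t i = comp C j1 (\<sigma> X)"
    and tj: "comp C t j = comp C j2 (\<sigma> Y)"
    using coproduct_copairing_exists[OF cp Q, of "comp C j1 (\<sigma> X)" "comp C j2 (\<sigma> Y)"]
      comp_hom[OF cat sX j1] comp_hom[OF cat sY j2] i j by (auto simp: hom_def)
  txt \<open>The coproduct of LX and LY only lies in S up to an isomorphism \<psi>.\<close>
  have "in_rep C S (cod C j1)"
    using clc[unfolded closed_under_finite_coproducts_def, THEN conjunct2, rule_format, of j1 j2]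
      cpj SX SY \<open>dom C j1 = L X\<close> \<open>dom C j2 = L Y\<close> by simp
  then obtain A \<psi> where SA: "S A" and \<psi>: "\<psi> \<in> hom C (cod C j1) A" and "iso C \<psi>"
    unfolding in_rep_def isomorphic_def by blast
  then obtain \<psi>' where \<psi>': "\<psi>' \<in> hom C A (cod C j1)" and \<psi>'\<psi>: "comp C \<psi>' \<psi> = idm C (cod C j1)"
    by (elim iso_inverse)
  obtain \<theta>' where \<theta>': "\<theta>' \<in> hom C (L P) A" and \<theta>'s: "comp C \<theta>' (\<sigma> P) = comp C \<psi> t"
    using reflection_factor_exists[OF fr P SA comp_hom[OF cat t \<psi>]] by blast
  have \<theta>: "comp C \<psi>' \<theta>' \<in> hom C (L P) (cod C j1)" using comp_hom[OF cat \<theta>' \<psi>'] .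
  have \<theta>s: "comp C (comp C \<psi>' \<theta>') (\<sigma> P) = t"
    using comp_assoc[OF cat sP \<theta>' \<psi>'] \<theta>'s comp_assoc[OF cat t \<psi> \<psi>'] \<psi>'\<psi> comp_idm_left[OF cat t]
    by simp
  show ?thesis
  proof (rule that[OF cpj j1 j2 \<theta>])
    show "comp C (comp C \<psi>' \<theta>') (comp C (\<sigma> P) i) = comp C j1 (\<sigma> X)"
      using comp_assoc[OF cat i sP \<theta>] \<theta>s ti by simp
    show "comp C (comp C \<psi>' \<theta>') (comp C (\<sigma> P) j) = comp C j2 (\<sigma> Y)"
      using comp_assoc[OF cat j sP \<theta>] \<theta>s tj by simp
  qed
qed

lemma diagonal_unit_commute:
  assumes cat: "category C" and fr: "full_reflective C S L \<sigma>"
    and p: "p \<in> hom C P X" and q: "q \<in> hom C P X"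
    and d: "d \<in> hom C X P" and pd: "comp C p d = idm C X" and qd: "comp C q d = idm C X"
    and prodL: "is_product C Lp Lq" and Lp: "Lp \<in> hom C (L P) (L X)" and Lq: "Lq \<in> hom C (L P) (L X)"
    and Lp\<sigma>: "comp C Lp (\<sigma> P) = comp C (\<sigma> X) p" and Lq\<sigma>: "comp C Lq (\<sigma> P) = comp C (\<sigma> X) q"
    and \<delta>: "\<delta> \<in> hom C (L X) (L P)" and Lp\<delta>: "comp C Lp \<delta> = idm C (L X)"
    and Lq\<delta>: "comp C Lq \<delta> = idm C (L X)"
  shows "comp C \<delta> (\<sigma> X) = comp C (\<sigma> P) d"
proof -
  have X: "X \<in> Obj C" and P: "P \<in> Obj C" using hom_objs[OF cat d] by auto
  have sX: "\<sigma> X \<in> hom C X (L X)" and sP: "\<sigma> P \<in> hom C P (L P)"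
    using reflection_unit[OF fr] X P by auto
  have dLp: "dom C Lp = L P" using Lp by (simp add: hom_def)
  have "comp C Lp (comp C \<delta> (\<sigma> X)) = comp C Lp (comp C (\<sigma> P) d)"
    using comp_assoc[OF cat sX \<delta> Lp] Lp\<delta> comp_idm_left[OF cat sX]
      comp_assoc[OF cat d sP Lp] Lp\<sigma> comp_assoc[OF cat d p sX] pd comp_idm_right[OF cat sX] by simp
  moreover have "comp C Lq (comp C \<delta> (\<sigma> X)) = comp C Lq (comp C (\<sigma> P) d)"
    using comp_assoc[OF cat sX \<delta> Lq] Lq\<delta> comp_idm_left[OF cat sX]
      comp_assoc[OF cat d sP Lq] Lq\<sigma> comp_assoc[OF cat d q sX] qd comp_idm_right[OF cat sX] by simp
  ultimately show ?thesis
    using product_arrow_eqI[OF prodL cat X] comp_hom[OF cat sX \<delta>] comp_hom[OF cat d sP] dLp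
    by simp
qed

lemma reflection_product_diagonal:
  assumes cat: "category C" and fr: "full_reflective C S L \<sigma>"
    and pres: "reflector_preserves_finite_products C L \<sigma>"
    and prod: "is_product C p q" and p: "p \<in> hom C P X" and q: "q \<in> hom C P X"
    and d: "d \<in> hom C X P" and pd: "comp C p d = idm C X" and qd: "comp C q d = idm C X"
  obtains Lp Lq \<delta> where "is_product C Lp Lq"
    and "Lp \<in> hom C (L P) (L X)" and "Lq \<in> hom C (L P) (L X)"
    and "comp C Lp (\<sigma> P) = comp C (\<sigma> X) p" and "comp C Lq (\<sigma> P) = comp C (\<sigma> X) q"
    and "\<delta> \<in> hom C (L X) (L P)" and "comp C Lp \<delta> = idm C (L X)" and "comp C Lq \<delta> = idm C (L X)"
    and "comp C \<delta> (\<sigma> X) = comp C (\<sigma> P) d"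
proof -
  have X: "X \<in> Obj C" and P: "P \<in> Obj C" using hom_objs[OF cat d] by auto
  have SX: "S (L X)" and sX: "\<sigma> X \<in> hom C X (L X)" using reflection_unit[OF fr X] by auto
  have LX: "L X \<in> Obj C" using reflective_Obj[OF fr SX] .
  obtain Lp where Lp: "Lp \<in> hom C (L P) (L X)" and Lp\<sigma>: "comp C Lp (\<sigma> P) = comp C (\<sigma> X) p"
    using reflection_factor_exists[OF fr P SX comp_hom[OF cat p sX]] by blast
  obtain Lq where Lq: "Lq \<in> hom C (L P) (L X)" and Lq\<sigma>: "comp C Lq (\<sigma> P) = comp C (\<sigma> X) q"
    using reflection_factor_exists[OF fr P SX comp_hom[OF cat q sX]] by blast
  have prodL: "is_product C Lp Lq"
    using pres[unfolded reflector_preserves_finite_products_def, THEN conjunct2, rule_format, of p q Lp Lq]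
      prod Lp Lq Lp\<sigma> Lq\<sigma> p q by (simp add: hom_def)
  obtain \<delta> where \<delta>: "\<delta> \<in> hom C (L X) (L P)" and Lp\<delta>: "comp C Lp \<delta> = idm C (L X)"
    and Lq\<delta>: "comp C Lq \<delta> = idm C (L X)"
    using product_pairing_exists[OF prodL LX, of "idm C (L X)" "idm C (L X)"] idm_hom[OF cat LX] Lp Lq
    by (auto simp: hom_def)
  show ?thesis
    using that[OF prodL Lp Lq Lp\<sigma> Lq\<sigma> \<delta> Lp\<delta> Lq\<delta>]
      diagonal_unit_commute[OF cat fr p q d pd qd prodL Lp Lq Lp\<sigma> Lq\<sigma> \<delta> Lp\<delta> Lq\<delta>] by blast
qed

lemma detached_unit_off_diagonal_subinitial:
  assumes ext: "extensive C" and det: "detached C S L \<sigma>"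
    and prod: "is_product C p q" and p: "p \<in> hom C P X" and q: "q \<in> hom C P X"
    and d: "d \<in> hom C X P" and pd: "comp C p d = idm C X" and qd: "comp C q d = idm C X"
    and cp: "is_coproduct C d c" and c: "c \<in> hom C D P"
    and b: "b \<in> hom C B D"
    and eq: "comp C (\<sigma> X) (comp C p (comp C c b)) = comp C (\<sigma> X) (comp C q (comp C c b))"
  shows "subinitial C B"
proof -
  have cat: "category C" and cf: "has_finite_coproducts C" using ext by (auto simp: extensive_def)
  have fr: "full_reflective C S L \<sigma>" and clc: "closed_under_finite_coproducts C S"
    and pres: "reflector_preserves_finite_products C L \<sigma>"
    using det by (auto simp: detached_def)
  have X: "X \<in> Obj C" and P: "P \<in> Obj C" and D: "D \<in> Obj C"
    using hom_objs[OF cat d] hom_objs[OF cat c] by auto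
  have sX: "\<sigma> X \<in> hom C X (L X)" and sP: "\<sigma> P \<in> hom C P (L P)" and sD: "\<sigma> D \<in> hom C D (L D)"
    using reflection_unit[OF fr] X P D by auto
  obtain Lp Lq \<delta> where prodL: "is_product C Lp Lq"
    and Lp: "Lp \<in> hom C (L P) (L X)" and Lq: "Lq \<in> hom C (L P) (L X)"
    and Lp\<sigma>: "comp C Lp (\<sigma> P) = comp C (\<sigma> X) p" and Lq\<sigma>: "comp C Lq (\<sigma> P) = comp C (\<sigma> X) q"
    and \<delta>: "\<delta> \<in> hom C (L X) (L P)" and Lp\<delta>: "comp C Lp \<delta> = idm C (L X)"
    and Lq\<delta>: "comp C Lq \<delta> = idm C (L X)" and \<delta>\<sigma>: "comp C \<delta> (\<sigma> X) = comp C (\<sigma> P) d"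
    by (rule reflection_product_diagonal[OF cat fr pres prod p q d pd qd])
  obtain j1 j2 \<theta> where cpj: "is_coproduct C j1 j2" and j1: "j1 \<in> hom C (L X) (cod C j1)"
    and j2: "j2 \<in> hom C (L D) (cod C j1)" and \<theta>: "\<theta> \<in> hom C (L P) (cod C j1)"
    and \<theta>d: "comp C \<theta> (comp C (\<sigma> P) d) = comp C j1 (\<sigma> X)"
    and \<theta>c: "comp C \<theta> (comp C (\<sigma> P) c) = comp C j2 (\<sigma> D)"
    by (rule reflection_coproduct_comparison[OF cat cf fr clc cp d c])
  define x where "x = comp C p (comp C c b)"
  have cb: "comp C c b \<in> hom C B P" using comp_hom[OF cat b c] .
  have x: "x \<in> hom C B X" unfolding x_def using comp_hom[OF cat cb p] .
  have B: "B \<in> Obj C" using hom_objs[OF cat b] by auto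
  txt \<open>By eq, the map \<sigma> P (c b) into LX \<times> LX factors through the diagonal of LX; \<theta> then
    carries it into the first summand of LX + LD, while by construction it lies in the second.\<close>
  have "comp C Lp (comp C (\<sigma> P) (comp C c b)) = comp C Lp (comp C \<delta> (comp C (\<sigma> X) x))"
    using comp_assoc[OF cat cb sP Lp] Lp\<sigma> comp_assoc[OF cat cb p sX]
      comp_assoc[OF cat comp_hom[OF cat x sX] \<delta> Lp] Lp\<delta> comp_idm_left[OF cat comp_hom[OF cat x sX]]
    by (simp add: x_def)
  moreover have "comp C Lq (comp C (\<sigma> P) (comp C c b)) = comp C Lq (comp C \<delta> (comp C (\<sigma> X) x))"
    using comp_assoc[OF cat cb sP Lq] Lq\<sigma> comp_assoc[OF cat cb q sX] eq
      comp_assoc[OF cat comp_hom[OF cat x sX] \<delta> Lq] Lq\<delta> comp_idm_left[OF cat comp_hom[OF cat x sX]]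
    by (simp add: x_def)
  ultimately have \<sigma>cb: "comp C (\<sigma> P) (comp C c b) = comp C \<delta> (comp C (\<sigma> X) x)"
    using product_arrow_eqI[OF prodL cat B] comp_hom[OF cat cb sP]
      comp_hom[OF cat comp_hom[OF cat x sX] \<delta>] Lp by (simp add: hom_def)
  have "comp C j2 (comp C (\<sigma> D) b) = comp C \<theta> (comp C (\<sigma> P) (comp C c b))"
    using comp_assoc[OF cat b sD j2] \<theta>c comp_assoc[OF cat b c sP] comp_assoc[OF cat b comp_hom[OF cat c sP] \<theta>]
    by simp
  also have "\<dots> = comp C (comp C \<theta> (comp C \<delta> (\<sigma> X))) x"
    using \<sigma>cb comp_assoc[OF cat x sX \<delta>] comp_assoc[OF cat x comp_hom[OF cat sX \<delta>] \<theta>] by simp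
  also have "\<dots> = comp C j1 (comp C (\<sigma> X) x)"
    using \<delta>\<sigma> \<theta>d comp_assoc[OF cat x sX j1] by simp
  finally show ?thesis
    using extensive_coproduct_disjoint[OF ext cpj _ _ , of "comp C (\<sigma> X) x" B "comp C (\<sigma> D) b"]
      comp_hom[OF cat x sX] comp_hom[OF cat b sD] j1 j2 by (simp add: hom_def)
qed

lemma decidable_in_detached:
  assumes ext: "extensive C" and det: "detached C S L \<sigma>" and dec: "decidable C X"
  shows "in_rep C S X"
proof -
  have cat: "category C" using ext by (simp add: extensive_def)
  obtain p q d where prod: "is_product C p q" and "cod C p = X" and "cod C q = X"
    and d0: "d \<in> hom C X (dom C p)" and pd: "comp C p d = idm C X" and qd: "comp C q d = idm C X"
    and "summand C d"
    using dec unfolding decidable_def by blast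
  then obtain c where cp: "is_coproduct C d c" unfolding summand_def by blast
  define P where "P = dom C p"
  have p: "p \<in> hom C P X" and q: "q \<in> hom C P X" and d: "d \<in> hom C X P"
    and c: "c \<in> hom C (dom C c) P"
    using prod \<open>cod C p = X\<close> \<open>cod C q = X\<close> d0 cp
    by (auto simp: is_product_def is_coproduct_def hom_def P_def)
  have fr: "full_reflective C S L \<sigma>" using det by (simp add: detached_def)
  have X: "X \<in> Obj C" using hom_objs[OF cat d] by auto
  have SX: "S (L X)" and sX: "\<sigma> X \<in> hom C X (L X)" using reflection_unit[OF fr X] by auto
  have "mono C (\<sigma> X)"
    using decidable_mono_criterion[OF ext prod p q d pd qd cp c sX]
      detached_unit_off_diagonal_subinitial[OF ext det prod p q d pd qd cp c] by blast
  then have "iso C (\<sigma> X)"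
    using det[unfolded detached_def closed_under_subobjects_def] SX sX
    by (auto simp: hom_def elim!: allE[of _ "L X"] allE[of _ "\<sigma> X"])
  then show ?thesis unfolding in_rep_def isomorphic_def using SX sX by blast
qed

text \<open>Minimality holds in every extensive category.\<close>
theorem corollary2p10:
  fixes E :: "('o, 'm) cat"
  assumes "extensive E"
    and "has_finite_limits E"
    and "\<exists>L \<sigma>. detached E (decidable E) L \<sigma>"
  shows "\<forall>S L' \<sigma>'. detached E S L' \<sigma>' \<longrightarrow> (\<forall>X. decidable E X \<longrightarrow> in_rep E S X)"
  using decidable_in_detached[OF \<open>extensive E\<close>] by blast

end
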